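(* Let $R\in\{\mathrm{ML},\mathrm{wML},\mathrm{C},\mathrm{S}\}$. Then there is a precise forecasting system $\varphi$ for which every path $\omega\in\Omega$ is $R$-random; moreover, any such precise forecasting system is necessarily non-stationary and non-computable.
   Context: Notation: $\mathbb N=\{1,2,\dots\}$, $\mathbb N_0=\mathbb N\cup\{0\}$. $\Omega=\{0,1\}^{\mathbb N}$ is the set of paths $\omega=(\omega_1,\omega_2,\dots)$; $\omega_{1:n}=(\omega_1,\dots,\omega_n)$, $\omega_{1:0}=\square$. $\mathbb S=\bigcup_{n\in\mathbb N_0}\{0,1\}^n$ is the set of situations, $|s|$ the length, $sx$ concatenation. $\mathscr I$ is the set of closed intervals $I\subseteq[0,1]$. For $r\in[0,1]$, $f:\{0,1\}\to\mathbb R$: $E_r(f)=rf(1)+(1-r)f(0)$; $\overline E_I(f)=\max_{r\in I}E_r(f)$. A forecasting system is a map $\varphi:\mathbb S\to\mathscr I$; $\underline\varphi(s)=\min\varphi(s)$, $\overline\varphi(s)=\max\varphi(s)$; precise if each $\varphi(s)$ is a singleton; stationary if constant. A real process is $F:\mathbb S\to\mathbb R$; $\Delta F(s)$ is $x\mapsto F(sx)-F(s)$. $M$ is a supermartingale for $\varphi$ if $\overline E_{\varphi(s)}(\Delta M(s))\le0$ for all $s$. A test process is a non-negative real process with $F(\square)=1$; a test supermartingale for $\varphi$ is a test process that is a supermartingale for $\varphi$. A multiplier process $D$ assigns to each $s$ a function $D(s):\{0,1\}\to[0,\infty)$ and generates the test process $F(\square)=1$, $F(sx)=F(s)D(s)(x)$.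 Computability: maps from countable effectively encoded domains to $\mathbb N_0$ or $\mathbb Q$ are recursive if Turing-computable; a real map $r$ on a domain $\mathscr D$ is lower semicomputable if $r(d)=\lim_nq(d,n)$ for a recursive rational $q$ non-decreasing in $n$, computable if $|r(d)-q(d,n)|<2^{-n}$ for a recursive rational $q$. A forecasting system is computable if $\underline\varphi,\overline\varphi$ are computable. $\mathscr F_{\mathrm{ML}}$: lower semicomputable test processes; $\mathscr F_{\mathrm{wML}}$: test processes generated by lower semicomputable multiplier processes; $\mathscr F_{\mathrm C}=\mathscr F_{\mathrm S}$: positive rational-valued recursive test processes. $\overline{\mathbb T}_R(\varphi)$: elements of $\mathscr F_R$ that are test supermartingales for $\varphi$. For $R\in\{\mathrm{ML},\mathrm{wML},\mathrm C\}$, $\omega$ is $R$-random for $\varphi$ if no $T\in\overline{\mathbb T}_R(\varphi)$ has $\limsup_nT(\omega_{1:n})=\infty$. A real growth function is a computable, non-decreasing, unbounded $\tau:\mathbb N_0\to[0,\infty)$; $\omega$ is S-random for $\varphi$ if there are no $T\in\overline{\mathbb T}_{\mathrm S}(\varphi)$ and real growth function $\tau$ with $\limsup_n[T(\omega_{1:n})-\tau(n)]\ge0$. *)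

theory Defs
  imports "HOL-Analysis.Analysis" "HOL-Library.Nat_Bijection" "HOL-Library.Liminf_Limsup"
begin

(* The binary alphabet {0,1} is rendered as bool (False = 0, True = 1).
   A situation is a bool list; a path omega = (omega_1, omega_2, ...) is a
   function nat => bool with omega_{k+1} = omega k. *)
type_synonym situation = "bool list"
type_synonym path = "nat \<Rightarrow> bool"

definition prefix :: "path \<Rightarrow> nat \<Rightarrow> situation" where
  "prefix \<omega> n = map \<omega> [0..<n]"

definition closed_unit_intervals :: "real set set" where
  "closed_unit_intervals = {{a..b} | a b. 0 \<le> a \<and> a \<le> b \<and> b \<le> 1}"

definition forecasting_system :: "(situation \<Rightarrow> real set) \<Rightarrow> bool" where
  "forecasting_system \<phi> \<longleftrightarrow> (\<forall>s. \<phi> s \<in> closed_unit_intervals)"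

definition lower_fs :: "(situation \<Rightarrow> real set) \<Rightarrow> situation \<Rightarrow> real" where
  "lower_fs \<phi> s = Inf (\<phi> s)"

definition upper_fs :: "(situation \<Rightarrow> real set) \<Rightarrow> situation \<Rightarrow> real" where
  "upper_fs \<phi> s = Sup (\<phi> s)"

definition precise :: "(situation \<Rightarrow> real set) \<Rightarrow> bool" where
  "precise \<phi> \<longleftrightarrow> (\<forall>s. \<exists>r. \<phi> s = {r})"

definition stationary :: "(situation \<Rightarrow> real set) \<Rightarrow> bool" where
  "stationary \<phi> \<longleftrightarrow> (\<exists>I. \<forall>s. \<phi> s = I)"

definition E :: "real \<Rightarrow> (bool \<Rightarrow> real) \<Rightarrow> real" where
  "E r f = r * f True + (1 - r) * f False"

(* upper expectation: max over r in I (I compact nonempty, so Sup = Max) *)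
definition upperE :: "real set \<Rightarrow> (bool \<Rightarrow> real) \<Rightarrow> real" where
  "upperE I f = Sup ((\<lambda>r. E r f) ` I)"

definition Delta :: "(situation \<Rightarrow> real) \<Rightarrow> situation \<Rightarrow> bool \<Rightarrow> real" where
  "Delta F s = (\<lambda>x. F (s @ [x]) - F s)"

definition supermartingale :: "(situation \<Rightarrow> real set) \<Rightarrow> (situation \<Rightarrow> real) \<Rightarrow> bool" where
  "supermartingale \<phi> M \<longleftrightarrow> (\<forall>s. upperE (\<phi> s) (Delta M s) \<le> 0)"

definition test_process :: "(situation \<Rightarrow> real) \<Rightarrow> bool" where
  "test_process F \<longleftrightarrow> (\<forall>s. 0 \<le> F s) \<and> F [] = 1"

definition test_supermartingale :: "(situation \<Rightarrow> real set) \<Rightarrow> (situation \<Rightarrow> real) \<Rightarrow> bool" where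
  "test_supermartingale \<phi> T \<longleftrightarrow> test_process T \<and> supermartingale \<phi> T"

definition multiplier_process :: "(situation \<Rightarrow> bool \<Rightarrow> real) \<Rightarrow> bool" where
  "multiplier_process D \<longleftrightarrow> (\<forall>s x. 0 \<le> D s x)"

definition generated_by :: "(situation \<Rightarrow> bool \<Rightarrow> real) \<Rightarrow> (situation \<Rightarrow> real) \<Rightarrow> bool" where
  "generated_by D F \<longleftrightarrow> F [] = 1 \<and> (\<forall>s x. F (s @ [x]) = F s * D s x)"

(* Partial recursive functions nat -> nat (Kleene mu-recursion, with pairing
   via the Cantor bijection prod_encode / prod_decode). *)
definition rfind :: "(nat \<Rightarrow> nat option) \<Rightarrow> nat \<Rightarrow> nat option" where
  "rfind f a = (if \<exists>n. f (prod_encode (a, n)) = Some 0 \<and> (\<forall>m<n. f (prod_encode (a, m)) \<noteq> None)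
                then Some (LEAST n. f (prod_encode (a, n)) = Some 0) else None)"

inductive partrec :: "(nat \<Rightarrow> nat option) \<Rightarrow> bool" where
  zero: "partrec (\<lambda>n. Some 0)"
| succ: "partrec (\<lambda>n. Some (Suc n))"
| left: "partrec (\<lambda>n. Some (fst (prod_decode n)))"
| right: "partrec (\<lambda>n. Some (snd (prod_decode n)))"
| pair: "partrec f \<Longrightarrow> partrec g \<Longrightarrow>
    partrec (\<lambda>n. case f n of None \<Rightarrow> None
                 | Some a \<Rightarrow> (case g n of None \<Rightarrow> None | Some b \<Rightarrow> Some (prod_encode (a, b))))"
| comp: "partrec f \<Longrightarrow> partrec g \<Longrightarrow>
    partrec (\<lambda>n. case g n of None \<Rightarrow> None | Some m \<Rightarrow> f m)"
| prec: "partrec f \<Longrightarrow> partrec g \<Longrightarrow>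
    partrec (\<lambda>p. rec_nat (f (fst (prod_decode p)))
                  (\<lambda>y IH. case IH of None \<Rightarrow> None
                     | Some i \<Rightarrow> g (prod_encode (fst (prod_decode p), prod_encode (y, i))))
                  (snd (prod_decode p)))"
| rfind: "partrec f \<Longrightarrow> partrec (rfind f)"

definition recursive_nat :: "(nat \<Rightarrow> nat) \<Rightarrow> bool" where
  "recursive_nat f \<longleftrightarrow> partrec (\<lambda>n. Some (f n))"

definition rat_of_code :: "nat \<Rightarrow> rat" where
  "rat_of_code n = (case prod_decode n of (a, b) \<Rightarrow> Fract (int_decode a) (int b + 1))"

definition sit_code :: "situation \<Rightarrow> nat" where
  "sit_code s = list_encode (map of_bool s)"

definition pair_code :: "('d \<Rightarrow> nat) \<Rightarrow> ('e \<Rightarrow> nat) \<Rightarrow> 'd \<times> 'e \<Rightarrow> nat" where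
  "pair_code enc1 enc2 p = prod_encode (enc1 (fst p), enc2 (snd p))"

definition bool_code :: "bool \<Rightarrow> nat" where
  "bool_code x = of_bool x"

definition recursive_rat :: "('d \<Rightarrow> nat) \<Rightarrow> ('d \<Rightarrow> rat) \<Rightarrow> bool" where
  "recursive_rat enc q \<longleftrightarrow> (\<exists>f. recursive_nat f \<and> (\<forall>d. q d = rat_of_code (f (enc d))))"

definition lower_semicomputable :: "('d \<Rightarrow> nat) \<Rightarrow> ('d \<Rightarrow> real) \<Rightarrow> bool" where
  "lower_semicomputable enc r \<longleftrightarrow>
     (\<exists>q. recursive_rat (pair_code enc id) q \<and> (\<forall>d n. q (d, n) \<le> q (d, Suc n)) \<and>
          (\<forall>d. (\<lambda>n. real_of_rat (q (d, n))) \<longlonglongrightarrow> r d))"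

definition computable_real :: "('d \<Rightarrow> nat) \<Rightarrow> ('d \<Rightarrow> real) \<Rightarrow> bool" where
  "computable_real enc r \<longleftrightarrow>
     (\<exists>q. recursive_rat (pair_code enc id) q \<and>
          (\<forall>d n. \<bar>r d - real_of_rat (q (d, n))\<bar> < 1 / 2 ^ n))"

definition computable_fs :: "(situation \<Rightarrow> real set) \<Rightarrow> bool" where
  "computable_fs \<phi> \<longleftrightarrow> computable_real sit_code (lower_fs \<phi>) \<and> computable_real sit_code (upper_fs \<phi>)"

definition F_ML :: "(situation \<Rightarrow> real) set" where
  "F_ML = {F. test_process F \<and> lower_semicomputable sit_code F}"

definition F_wML :: "(situation \<Rightarrow> real) set" where
  "F_wML = {F. test_process F \<and> (\<exists>D. multiplier_process D \<and> generated_by D F \<and>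
                 lower_semicomputable (pair_code sit_code bool_code) (\<lambda>(s, x). D s x))}"

(* F_C = F_S *)
definition F_C :: "(situation \<Rightarrow> real) set" where
  "F_C = {F. test_process F \<and> (\<forall>s. 0 < F s) \<and>
            (\<exists>q. recursive_rat sit_code q \<and> (\<forall>s. F s = real_of_rat (q s)))}"

definition real_growth_function :: "(nat \<Rightarrow> real) \<Rightarrow> bool" where
  "real_growth_function \<tau> \<longleftrightarrow> computable_real id \<tau> \<and> mono \<tau> \<and> (\<forall>n. 0 \<le> \<tau> n)
      \<and> \<not> bdd_above (range \<tau>)"

datatype rtype = R_ML | R_wML | R_C | R_S

definition unbounded_along :: "(situation \<Rightarrow> real) \<Rightarrow> path \<Rightarrow> bool" where
  "unbounded_along T \<omega> \<longleftrightarrow> limsup (\<lambda>n. ereal (T (prefix \<omega> n))) = \<infinity>"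

fun random :: "rtype \<Rightarrow> (situation \<Rightarrow> real set) \<Rightarrow> path \<Rightarrow> bool" where
  "random R_ML \<phi> \<omega> \<longleftrightarrow> \<not> (\<exists>T\<in>F_ML. test_supermartingale \<phi> T \<and> unbounded_along T \<omega>)"
| "random R_wML \<phi> \<omega> \<longleftrightarrow> \<not> (\<exists>T\<in>F_wML. test_supermartingale \<phi> T \<and> unbounded_along T \<omega>)"
| "random R_C \<phi> \<omega> \<longleftrightarrow> \<not> (\<exists>T\<in>F_C. test_supermartingale \<phi> T \<and> unbounded_along T \<omega>)"
| "random R_S \<phi> \<omega> \<longleftrightarrow> \<not> (\<exists>T\<in>F_C. \<exists>\<tau>. test_supermartingale \<phi> T \<and> real_growth_function \<tau> \<and>
        limsup (\<lambda>n. ereal (T (prefix \<omega> n) - \<tau> n)) \<ge> 0)"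

end

theory Submission
  imports Defs
begin

text \<open>
  Existence. Every test in \<open>F_ML\<close>, \<open>F_wML\<close> and \<open>F_C\<close> is determined by finitely
  much data (partial recursive functions), so there are only countably many of them. A non-negative
  process can be unbounded along a path only if it increases at infinitely many situations. Enumerate
  the tests, give each test with infinitely many such growth situations a growth situation of its
  own, and forecast there the degenerate probability of an outcome on which the test increases: then
  that test is not a supermartingale. So every test supermartingale for this forecast grows at only
  finitely many situations, is bounded, and no path is non-random.

  Necessity. Suppose a precise forecast \<open>p\<close> admits a decidable predicate \<open>g\<close> with
  \<open>p \<le> 3/4\<close> where \<open>g\<close> holds and \<open>p \<ge> 1/4\<close> where it fails: a constant one if \<open>p\<close> is
  stationary, and \<open>q s \<le> 1/2\<close> for a \<open>1/4\<close>-approximation \<open>q\<close> of \<open>p\<close> if \<open>p\<close> is computable.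
  Multiplying capital by \<open>6/5\<close> on the outcome \<open>g s\<close> and by \<open>2/5\<close> on the other one is then a
  computable test supermartingale, and it grows like \<open>(6/5)^n\<close> along the path that always takes
  the outcome predicted by \<open>g\<close>.
\<close>

section \<open>Closure properties of recursive functions\<close>

lemma recursive_nat_comp:
  "recursive_nat f \<Longrightarrow> recursive_nat g \<Longrightarrow> recursive_nat (\<lambda>n. f (g n))"
  unfolding recursive_nat_def using partrec.comp[of "\<lambda>n. Some (f n)" "\<lambda>n. Some (g n)"] by simp

lemma recursive_nat_pair:
  "recursive_nat f \<Longrightarrow> recursive_nat g \<Longrightarrow> recursive_nat (\<lambda>n. prod_encode (f n, g n))"
  unfolding recursive_nat_def using partrec.pair[of "\<lambda>n. Some (f n)" "\<lambda>n. Some (g n)"] by simp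

lemma recursive_nat_fst: "recursive_nat f \<Longrightarrow> recursive_nat (\<lambda>n. fst (prod_decode (f n)))"
  using recursive_nat_comp[of "\<lambda>n. fst (prod_decode n)"] partrec.left
  unfolding recursive_nat_def by blast

lemma recursive_nat_snd: "recursive_nat f \<Longrightarrow> recursive_nat (\<lambda>n. snd (prod_decode (f n)))"
  using recursive_nat_comp[of "\<lambda>n. snd (prod_decode n)"] partrec.right
  unfolding recursive_nat_def by blast

lemma recursive_nat_Suc: "recursive_nat f \<Longrightarrow> recursive_nat (\<lambda>n. Suc (f n))"
  using recursive_nat_comp[of Suc] partrec.succ unfolding recursive_nat_def by blast

lemma recursive_nat_id: "recursive_nat (\<lambda>n. n)"
proof -
  have "recursive_nat (\<lambda>n. fst (prod_decode n))" "recursive_nat (\<lambda>n. snd (prod_decode n))"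
    unfolding recursive_nat_def by (rule partrec.left partrec.right)+
  from recursive_nat_pair[OF this] show ?thesis by simp
qed

lemma recursive_nat_const: "recursive_nat (\<lambda>n. k)"
proof (induction k)
  case 0
  show ?case unfolding recursive_nat_def by (rule partrec.zero)
next
  case (Suc k)
  then show ?case by (rule recursive_nat_Suc)
qed

lemma rec_nat_Some_funpow:
  "rec_nat (Some x) (\<lambda>y IH. case IH of None \<Rightarrow> None | Some i \<Rightarrow> Some (h i)) n = Some ((h ^^ n) x)"
  by (induction n) auto

lemma recursive_nat_funpow:
  assumes h: "recursive_nat h" and "recursive_nat u" "recursive_nat v"
  shows "recursive_nat (\<lambda>n. (h ^^ v n) (u n))"
proof -
  have "recursive_nat (\<lambda>q. h (snd (prod_decode (snd (prod_decode q)))))"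
    by (intro recursive_nat_comp[OF h] recursive_nat_snd recursive_nat_id)
  from partrec.prec[OF recursive_nat_id[unfolded recursive_nat_def] this[unfolded recursive_nat_def]]
  have "recursive_nat (\<lambda>p. (h ^^ snd (prod_decode p)) (fst (prod_decode p)))"
    by (simp add: recursive_nat_def rec_nat_Some_funpow cong: option.case_cong)
  from recursive_nat_comp[OF this recursive_nat_pair[OF assms(2,3)]] show ?thesis by simp
qed

lemma recursive_nat_add:
  assumes "recursive_nat f" "recursive_nat g"
  shows "recursive_nat (\<lambda>n. f n + g n)"
proof -
  have "(Suc ^^ b) a = a + b" for a b by (induction b) auto
  with recursive_nat_funpow[OF recursive_nat_Suc[OF recursive_nat_id] assms] show ?thesis
    by (simp add: add.commute)
qed

lemma recursive_nat_pred: "recursive_nat (\<lambda>n. n - 1)"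
proof -
  let ?step = "\<lambda>q. prod_encode (snd (prod_decode q), Suc (snd (prod_decode q)))"
  have "(?step ^^ n) (prod_encode (0, 0)) = prod_encode (n - 1, n)" for n
    by (induction n) auto
  moreover have "recursive_nat (\<lambda>n. fst (prod_decode ((?step ^^ n) (prod_encode (0, 0)))))"
    by (intro recursive_nat_fst recursive_nat_funpow recursive_nat_pair recursive_nat_snd
        recursive_nat_Suc recursive_nat_id recursive_nat_const)
  ultimately show ?thesis by simp
qed

lemma recursive_nat_diff:
  assumes "recursive_nat f" "recursive_nat g"
  shows "recursive_nat (\<lambda>n. f n - g n)"
proof -
  have "((\<lambda>n. n - 1) ^^ b) a = a - b" for a b :: nat by (induction b) auto
  with recursive_nat_funpow[OF recursive_nat_pred assms] show ?thesis by simp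
qed

lemma recursive_nat_mult:
  assumes "recursive_nat f" "recursive_nat g"
  shows "recursive_nat (\<lambda>n. f n * g n)"
proof -
  let ?step = "\<lambda>q. prod_encode (fst (prod_decode q), fst (prod_decode q) + snd (prod_decode q))"
  have "(?step ^^ b) (prod_encode (a, 0)) = prod_encode (a, a * b)" for a b
    by (induction b) auto
  moreover have "recursive_nat (\<lambda>n. snd (prod_decode ((?step ^^ g n) (prod_encode (f n, 0)))))"
    by (intro recursive_nat_snd recursive_nat_funpow recursive_nat_pair recursive_nat_fst
        recursive_nat_add recursive_nat_id recursive_nat_const assms)
  ultimately show ?thesis by simp
qed

lemma recursive_nat_if:
  assumes "recursive_nat c" "recursive_nat f" "recursive_nat g"
  shows "recursive_nat (\<lambda>n. if c n = 0 then f n else g n)"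
proof -
  have "recursive_nat (\<lambda>n. f n * (1 - c n) + g n * (1 - (1 - c n)))"
    by (intro recursive_nat_add recursive_nat_mult recursive_nat_diff recursive_nat_const assms)
  moreover have "f n * (1 - c n) + g n * (1 - (1 - c n)) = (if c n = 0 then f n else g n)" for n
    by simp
  ultimately show ?thesis by simp
qed

lemma recursive_nat_mod2:
  assumes "recursive_nat f"
  shows "recursive_nat (\<lambda>n. f n mod 2)"
proof -
  have "((\<lambda>a. 1 - a) ^^ n) 0 = n mod 2" for n :: nat
    by (induction n) (auto simp: mod_Suc)
  moreover have "recursive_nat (\<lambda>n. ((\<lambda>a. 1 - a) ^^ f n) 0)"
    by (intro recursive_nat_funpow recursive_nat_diff recursive_nat_const recursive_nat_id assms)
  ultimately show ?thesis by simp
qed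

lemmas recursive_nat_intros =
  recursive_nat_id recursive_nat_const recursive_nat_fst recursive_nat_snd recursive_nat_Suc
  recursive_nat_pair recursive_nat_add recursive_nat_diff recursive_nat_mult recursive_nat_if
  recursive_nat_mod2

section \<open>Codes of situations\<close>

definition hd_code :: "nat \<Rightarrow> nat" where
  "hd_code c = fst (prod_decode (c - 1))"

definition tl_code :: "nat \<Rightarrow> nat" where
  "tl_code c = snd (prod_decode (c - 1))"

lemma hd_code_Suc [simp]: "hd_code (Suc (prod_encode (x, c))) = x"
  by (simp add: hd_code_def)

lemma tl_code_Suc [simp]: "tl_code (Suc (prod_encode (x, c))) = c"
  by (simp add: tl_code_def)

lemma recursive_nat_hd_code: "recursive_nat f \<Longrightarrow> recursive_nat (\<lambda>n. hd_code (f n))"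
  unfolding hd_code_def by (intro recursive_nat_intros)

lemma recursive_nat_tl_code: "recursive_nat f \<Longrightarrow> recursive_nat (\<lambda>n. tl_code (f n))"
  unfolding tl_code_def by (intro recursive_nat_intros)

lemma length_le_list_encode: "length xs \<le> list_encode xs"
proof (induction xs)
  case (Cons x xs)
  then show ?case using le_prod_encode_2[of "list_encode xs" x] by simp
qed simp

text \<open>A state of \<open>rev_step\<close> codes the part of the list still to be read and the part
  already read, in reverse.\<close>

definition rev_step :: "nat \<Rightarrow> nat" where
  "rev_step st = (if fst (prod_decode st) = 0 then st
     else prod_encode (tl_code (fst (prod_decode st)),
            Suc (prod_encode (hd_code (fst (prod_decode st)), snd (prod_decode st)))))"

definition rev_code :: "nat \<Rightarrow> nat" where
  "rev_code c = snd (prod_decode ((rev_step ^^ c) (prod_encode (c, 0))))"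

lemma rev_code_list_encode [simp]: "rev_code (list_encode xs) = list_encode (rev xs)"
proof -
  have "(rev_step ^^ k) (prod_encode (list_encode xs, 0))
      = prod_encode (list_encode (drop k xs), list_encode (rev (take k xs)))" for k
  proof (induction k)
    case (Suc k)
    then show ?case
      by (cases "k < length xs")
        (simp_all add: rev_step_def Cons_nth_drop_Suc[symmetric] take_Suc_conv_app_nth)
  qed simp
  then show ?thesis
    using length_le_list_encode[of xs] by (simp add: rev_code_def)
qed

lemma recursive_nat_rev_code: "recursive_nat f \<Longrightarrow> recursive_nat (\<lambda>n. rev_code (f n))"
  unfolding rev_code_def rev_step_def
  by (intro recursive_nat_intros recursive_nat_funpow recursive_nat_hd_code recursive_nat_tl_code)

lemma sit_code_Cons: "sit_code (x # s) = Suc (prod_encode (of_bool x, sit_code s))"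
  by (simp add: sit_code_def)

lemma recursive_nat_situation_recursion:
  fixes F :: "situation \<Rightarrow> nat"
  assumes h: "recursive_nat h"
    and F_Nil: "F [] = a"
    and F_snoc: "\<And>s x. F (s @ [x]) = h (prod_encode (sit_code s, prod_encode (of_bool x, F s)))"
  obtains f where "recursive_nat f" and "\<And>s. F s = f (sit_code s)"
proof -
  txt \<open>Scan the code of the situation; a state codes the unread suffix, the prefix read so far
    in reverse, and the value of \<open>F\<close> at that prefix.\<close>
  define step where "step st =
    (let rest = fst (prod_decode st); rev_seen = fst (prod_decode (snd (prod_decode st)));
         acc = snd (prod_decode (snd (prod_decode st)))
     in if rest = 0 then st
        else prod_encode (tl_code rest, prod_encode (Suc (prod_encode (hd_code rest, rev_seen)),
               h (prod_encode (rev_code rev_seen, prod_encode (hd_code rest, acc))))))" for st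
  have iter: "(step ^^ k) (prod_encode (sit_code s, prod_encode (0, a)))
      = prod_encode (sit_code (drop k s),
          prod_encode (list_encode (rev (map of_bool (take k s))), F (take k s)))" for s k
  proof (induction k)
    case 0
    then show ?case by (simp add: F_Nil)
  next
    case (Suc k)
    show ?case
    proof (cases "k < length s")
      case True
      then have "drop k s = s ! k # drop (Suc k) s" and "take (Suc k) s = take k s @ [s ! k]"
        by (simp_all add: Cons_nth_drop_Suc take_Suc_conv_app_nth)
      then show ?thesis
        using Suc.IH by (simp add: step_def Let_def sit_code_Cons F_snoc) (simp add: sit_code_def)
    next
      case False
      then show ?thesis using Suc.IH by (simp add: step_def sit_code_def)
    qed
  qed
  define f where
    "f c = snd (prod_decode (snd (prod_decode
       ((step ^^ c) (prod_encode (c, prod_encode (0, a)))))))" for c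
  have "recursive_nat f"
    unfolding f_def step_def Let_def
    by (intro recursive_nat_intros recursive_nat_funpow recursive_nat_hd_code recursive_nat_tl_code
        recursive_nat_rev_code recursive_nat_comp[OF h])
  moreover have "F s = f (sit_code s)" for s
    using iter[where s = s and k = "sit_code s"] length_le_list_encode[of "map of_bool s"]
    by (simp add: f_def sit_code_def)
  ultimately show thesis by (rule that)
qed

section \<open>Computable rationals and decidable predicates\<close>

lemma rat_of_code_even: "rat_of_code (prod_encode (2 * a, b)) = of_nat a / (of_nat b + 1)"
  by (simp add: rat_of_code_def int_decode_def sum_decode_def Fract_of_int_quotient)

lemma recursive_rat_fix_snd:
  assumes "recursive_rat (pair_code enc id) q"
  shows "recursive_rat enc (\<lambda>d. q (d, n))"
proof -
  obtain f where "recursive_nat f" and "\<forall>d. q d = rat_of_code (f (pair_code enc id d))"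
    using assms unfolding recursive_rat_def by blast
  moreover have "recursive_nat (\<lambda>c. f (prod_encode (c, n)))"
    by (intro recursive_nat_comp[OF \<open>recursive_nat f\<close>] recursive_nat_intros)
  ultimately show ?thesis unfolding recursive_rat_def pair_code_def by auto
qed

lemma recursive_rat_imp_lower_semicomputable:
  assumes "recursive_rat enc q"
  shows "lower_semicomputable enc (\<lambda>d. real_of_rat (q d))"
proof -
  obtain f where "recursive_nat f" and "\<forall>d. q d = rat_of_code (f (enc d))"
    using assms unfolding recursive_rat_def by blast
  moreover have "recursive_nat (\<lambda>c. f (fst (prod_decode c)))"
    by (intro recursive_nat_comp[OF \<open>recursive_nat f\<close>] recursive_nat_intros)
  ultimately have "recursive_rat (pair_code enc id) (\<lambda>(d, n). q d)"
    unfolding recursive_rat_def pair_code_def by auto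
  then show ?thesis
    unfolding lower_semicomputable_def by (intro exI[of _ "\<lambda>(d, n). q d"]) auto
qed

definition recursive_predicate :: "('d \<Rightarrow> nat) \<Rightarrow> ('d \<Rightarrow> bool) \<Rightarrow> bool" where
  "recursive_predicate enc P \<longleftrightarrow> (\<exists>G. recursive_nat G \<and> (\<forall>d. P d \<longleftrightarrow> G (enc d) \<noteq> 0))"

lemma recursive_predicate_const: "recursive_predicate enc (\<lambda>d. b)"
  unfolding recursive_predicate_def
  by (intro exI[of _ "\<lambda>c. of_bool b"]) (auto intro: recursive_nat_const)

text \<open>\<open>rat_of_code (prod_encode (a, b))\<close> is \<open>int_decode a / (b + 1)\<close>, and \<open>int_decode a\<close>
  is negative exactly for odd \<open>a\<close>.\<close>

lemma rat_of_code_le_iff: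
  "rat_of_code (prod_encode (a, b)) \<le> of_nat m / of_nat (Suc k) \<longleftrightarrow>
     odd a \<or> a * Suc k \<le> 2 * m * Suc b"
proof (cases "even a")
  case True
  then obtain j where a: "a = 2 * j" by blast
  have "rat_of_code (prod_encode (a, b)) \<le> of_nat m / of_nat (Suc k) \<longleftrightarrow>
      of_nat j * of_nat (Suc k) \<le> (of_nat m * of_nat (Suc b) :: rat)"
    unfolding a rat_of_code_even by (simp add: field_simps)
  also have "\<dots> \<longleftrightarrow> a * Suc k \<le> 2 * m * Suc b"
    unfolding a of_nat_mult[symmetric] of_nat_le_iff by linarith
  finally show ?thesis using True by simp
next
  case False
  then have "rat_of_code (prod_encode (a, b)) < 0"
    by (simp add: rat_of_code_def int_decode_def sum_decode_def Fract_of_int_quotient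
        divide_neg_pos)
  also have "0 \<le> (of_nat m / of_nat (Suc k) :: rat)" by simp
  finally show ?thesis using False by simp
qed

lemma recursive_predicate_rat_le:
  assumes "recursive_rat enc q"
  shows "recursive_predicate enc (\<lambda>d. q d \<le> of_nat m / of_nat (Suc k))"
proof -
  obtain f where f: "recursive_nat f" and q: "\<forall>d. q d = rat_of_code (f (enc d))"
    using assms unfolding recursive_rat_def by blast
  define G :: "nat \<Rightarrow> nat" where "G c = (let a = fst (prod_decode (f c)); b = snd (prod_decode (f c))
     in if a mod 2 = 0 then (if a * Suc k - 2 * m * Suc b = 0 then 1 else 0) else 1)" for c
  have "recursive_nat G"
    unfolding G_def Let_def by (intro recursive_nat_intros f)
  moreover have "q d \<le> of_nat m / of_nat (Suc k) \<longleftrightarrow> G (enc d) \<noteq> 0" for d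
    using rat_of_code_le_iff[of "fst (prod_decode (f (enc d)))" "snd (prod_decode (f (enc d)))"]
    by (simp add: q G_def Let_def even_iff_mod_2_eq_zero del: of_nat_Suc)
  ultimately show ?thesis unfolding recursive_predicate_def by blast
qed

section \<open>Countability of the computable test processes\<close>

definition multiplier_product :: "(situation \<Rightarrow> bool \<Rightarrow> 'a::comm_monoid_mult) \<Rightarrow> situation \<Rightarrow> 'a" where
  "multiplier_product D s = (\<Prod>i<length s. D (take i s) (s ! i))"

lemma multiplier_product_Nil [simp]: "multiplier_product D [] = 1"
  by (simp add: multiplier_product_def)

lemma multiplier_product_snoc [simp]:
  "multiplier_product D (s @ [x]) = multiplier_product D s * D s x"
  by (simp add: multiplier_product_def nth_append)

lemma generated_by_iff: "generated_by D F \<longleftrightarrow> F = multiplier_product D"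
proof
  assume gen: "generated_by D F"
  show "F = multiplier_product D"
  proof
    fix s
    show "F s = multiplier_product D s"
      by (induction s rule: rev_induct) (use gen in \<open>simp_all add: generated_by_def\<close>)
  qed
qed (simp add: generated_by_def)

lemma of_rat_multiplier_product:
  "of_rat (multiplier_product D s) = multiplier_product (\<lambda>s x. of_rat (D s x)) s"
  by (induction s rule: rev_induct) (simp_all add: of_rat_mult)

datatype partrec_code =
  Code_zero | Code_succ | Code_left | Code_right
| Code_pair partrec_code partrec_code
| Code_comp partrec_code partrec_code
| Code_prec partrec_code partrec_code
| Code_rfind partrec_code

instance partrec_code :: countable
  by countable_datatype

fun eval_code :: "partrec_code \<Rightarrow> nat \<Rightarrow> nat option" where
  "eval_code Code_zero = (\<lambda>n. Some 0)"
| "eval_code Code_succ = (\<lambda>n. Some (Suc n))"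
| "eval_code Code_left = (\<lambda>n. Some (fst (prod_decode n)))"
| "eval_code Code_right = (\<lambda>n. Some (snd (prod_decode n)))"
| "eval_code (Code_pair c d) = (\<lambda>n. case eval_code c n of None \<Rightarrow> None
     | Some a \<Rightarrow> (case eval_code d n of None \<Rightarrow> None | Some b \<Rightarrow> Some (prod_encode (a, b))))"
| "eval_code (Code_comp c d) = (\<lambda>n. case eval_code d n of None \<Rightarrow> None | Some m \<Rightarrow> eval_code c m)"
| "eval_code (Code_prec c d) = (\<lambda>p. rec_nat (eval_code c (fst (prod_decode p)))
     (\<lambda>y IH. case IH of None \<Rightarrow> None
        | Some i \<Rightarrow> eval_code d (prod_encode (fst (prod_decode p), prod_encode (y, i))))
     (snd (prod_decode p)))"
| "eval_code (Code_rfind c) = rfind (eval_code c)"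

lemma partrec_imp_eval_code: "partrec f \<Longrightarrow> f \<in> range eval_code"
proof (induction rule: partrec.induct)
  case (pair f g)
  then obtain c d where "f = eval_code c" "g = eval_code d" by blast
  then show ?case by (intro image_eqI[of _ _ "Code_pair c d"]) auto
next
  case (comp f g)
  then obtain c d where "f = eval_code c" "g = eval_code d" by blast
  then show ?case by (intro image_eqI[of _ _ "Code_comp c d"]) auto
next
  case (prec f g)
  then obtain c d where "f = eval_code c" "g = eval_code d" by blast
  then show ?case by (intro image_eqI[of _ _ "Code_prec c d"]) auto
next
  case (rfind f)
  then obtain c where "f = eval_code c" by blast
  then show ?case by (intro image_eqI[of _ _ "Code_rfind c"]) auto
qed (rule range_eqI, rule eval_code.simps[symmetric])+

lemma countable_recursive_nat: "countable {f. recursive_nat f}"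
proof -
  have "{f. recursive_nat f} \<subseteq> (\<lambda>c n. the (eval_code c n)) ` UNIV"
  proof
    fix f
    assume "f \<in> {f. recursive_nat f}"
    then obtain c where "eval_code c = (\<lambda>n. Some (f n))"
      using partrec_imp_eval_code[of "\<lambda>n. Some (f n)"] by (auto simp: recursive_nat_def)
    then show "f \<in> (\<lambda>c n. the (eval_code c n)) ` UNIV"
      by (intro image_eqI[of _ _ c]) auto
  qed
  then show ?thesis by (rule countable_subset) simp
qed

lemma countable_recursive_rat: "countable {q. recursive_rat enc q}"
proof -
  have "{q. recursive_rat enc q} \<subseteq> (\<lambda>f d. rat_of_code (f (enc d))) ` {f. recursive_nat f}"
    unfolding recursive_rat_def by auto
  then show ?thesis
    by (rule countable_subset) (intro countable_image countable_recursive_nat)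
qed

lemma countable_lower_semicomputable: "countable {r. lower_semicomputable enc r}"
proof -
  have "{r. lower_semicomputable enc r} \<subseteq>
      (\<lambda>q d. lim (\<lambda>n. real_of_rat (q (d, n)))) ` {q. recursive_rat (pair_code enc id) q}"
  proof
    fix r
    assume "r \<in> {r. lower_semicomputable enc r}"
    then obtain q where "recursive_rat (pair_code enc id) q"
      and "\<And>d. (\<lambda>n. real_of_rat (q (d, n))) \<longlonglongrightarrow> r d"
      unfolding lower_semicomputable_def by blast
    then show "r \<in> (\<lambda>q d. lim (\<lambda>n. real_of_rat (q (d, n)))) ` {q. recursive_rat (pair_code enc id) q}"
      by (intro image_eqI[of _ _ q]) (auto intro: limI[symmetric])
  qed
  then show ?thesis
    by (rule countable_subset) (intro countable_image countable_recursive_rat)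
qed

lemma countable_F_ML: "countable F_ML"
  by (rule countable_subset[OF _ countable_lower_semicomputable[of sit_code]])
    (simp add: F_ML_def Collect_mono)

lemma countable_F_wML: "countable F_wML"
proof -
  have "F_wML \<subseteq> (\<lambda>D. multiplier_product (curry D)) `
      {D. lower_semicomputable (pair_code sit_code bool_code) D}"
  proof
    fix F
    assume "F \<in> F_wML"
    then obtain D where "F = multiplier_product D"
      and "lower_semicomputable (pair_code sit_code bool_code) (\<lambda>(s, x). D s x)"
      unfolding F_wML_def generated_by_iff by blast
    then show "F \<in> (\<lambda>D. multiplier_product (curry D)) `
        {D. lower_semicomputable (pair_code sit_code bool_code) D}"
      by (intro image_eqI[where x = "\<lambda>(s, x). D s x"]) simp_all
  qed
  then show ?thesis
    by (rule countable_subset) (intro countable_image countable_lower_semicomputable)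
qed

lemma countable_F_C: "countable F_C"
proof -
  have "F_C \<subseteq> (\<lambda>q s. real_of_rat (q s)) ` {q. recursive_rat sit_code q}"
    unfolding F_C_def by auto
  then show ?thesis
    by (rule countable_subset) (intro countable_image countable_recursive_rat)
qed

section \<open>A precise forecast defeating every computable test\<close>

lemma upperE_singleton [simp]: "upperE {r} f = E r f"
  by (simp add: upperE_def)

lemma forecasting_system_singleton:
  assumes "\<And>s. 0 \<le> p s" and "\<And>s. p s \<le> 1"
  shows "forecasting_system (\<lambda>s. {p s})"
  unfolding forecasting_system_def closed_unit_intervals_def
proof
  fix s
  have "{p s} = {p s..p s}" by simp
  with assms show "{p s} \<in> {{a..b} |a b. 0 \<le> a \<and> a \<le> b \<and> b \<le> 1}"
    by blast
qed

lemma distinct_representatives: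
  fixes A :: "nat \<Rightarrow> 'a set"
  obtains c where "\<And>k. infinite (A k) \<Longrightarrow> c k \<in> A k" and "inj_on c {k. infinite (A k)}"
proof -
  define chosen :: "nat \<Rightarrow> 'a set"
    where "chosen = rec_nat {} (\<lambda>k S. insert (SOME s. s \<in> A k \<and> s \<notin> S) S)"
  define c where "c k = (SOME s. s \<in> A k \<and> s \<notin> chosen k)" for k
  have chosen_0: "chosen 0 = {}" and chosen_Suc: "chosen (Suc k) = insert (c k) (chosen k)" for k
    by (simp_all add: chosen_def c_def)
  have finite: "finite (chosen k)" for k
    by (induction k) (simp_all add: chosen_0 chosen_Suc)
  have fresh: "c k \<in> A k \<and> c k \<notin> chosen k" if "infinite (A k)" for k
  proof -
    have "infinite (A k - chosen k)"
      using Diff_infinite_finite[OF finite that] .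
    then have "\<exists>s. s \<in> A k \<and> s \<notin> chosen k"
      by (metis Diff_iff ex_in_conv finite.emptyI)
    then show ?thesis unfolding c_def by (rule someI_ex)
  qed
  have earlier: "j < k \<Longrightarrow> c j \<in> chosen k" for j k
    by (induction k) (auto simp: chosen_0 chosen_Suc less_Suc_eq)
  have "inj_on c {k. infinite (A k)}"
  proof (rule inj_onI)
    fix j k
    assume "j \<in> {k. infinite (A k)}" "k \<in> {k. infinite (A k)}" and same: "c j = c k"
    from \<open>j \<in> _\<close> \<open>k \<in> _\<close> have "c j \<notin> chosen j" "c k \<notin> chosen k"
      using fresh by simp_all
    with same earlier[of j k] earlier[of k j] show "j = k"
      by (cases j k rule: linorder_cases) simp_all
  qed
  then show thesis
  proof (rule that[rotated])
    show "c k \<in> A k" if "infinite (A k)" for k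
      using fresh[OF that] by simp
  qed
qed

definition growth_situations :: "(situation \<Rightarrow> real) \<Rightarrow> situation set" where
  "growth_situations T = {s. T s < T (s @ [True]) \<or> T s < T (s @ [False])}"

lemma forecast_defeating_countable_family:
  assumes "countable \<F>"
  obtains \<phi> where "forecasting_system \<phi>" and "precise \<phi>"
    and "\<And>T. T \<in> \<F> \<Longrightarrow> supermartingale \<phi> T \<Longrightarrow> finite (growth_situations T)"
proof -
  define A where "A k = growth_situations (from_nat_into \<F> k)" for k
  obtain c where c_growth: "\<And>k. infinite (A k) \<Longrightarrow> c k \<in> A k"
    and inj: "inj_on c {k. infinite (A k)}"
    using distinct_representatives[of A] by metis
  define K where "K = {k. infinite (A k)}"
  define p :: "situation \<Rightarrow> real" where "p s = (if s \<in> c ` K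
      then (let T = from_nat_into \<F> (the_inv_into K c s) in if T s < T (s @ [True]) then 1 else 0)
      else 1/2)" for s
  have "forecasting_system (\<lambda>s. {p s})"
    by (rule forecasting_system_singleton) (simp_all add: p_def Let_def)
  moreover have "precise (\<lambda>s. {p s})"
    by (simp add: precise_def)
  moreover have "finite (growth_situations T)"
    if T: "T \<in> \<F>" and super: "supermartingale (\<lambda>s. {p s}) T" for T
  proof (rule ccontr)
    assume "infinite (growth_situations T)"
    moreover obtain k where k: "from_nat_into \<F> k = T"
      using from_nat_into_surj[OF assms T] by blast
    ultimately have "k \<in> K" by (simp add: K_def A_def)
    then have "c k \<in> growth_situations T"
      using c_growth[of k] k by (simp add: K_def A_def)
    moreover have "p (c k) = (if T (c k) < T (c k @ [True]) then 1 else 0)"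
      using \<open>k \<in> K\<close> k by (simp add: p_def the_inv_into_f_f[OF inj[folded K_def]])
    ultimately have "0 < E (p (c k)) (Delta T (c k))"
      by (auto simp: growth_situations_def E_def Delta_def)
    moreover have "upperE {p (c k)} (Delta T (c k)) \<le> 0"
      using super unfolding supermartingale_def by blast
    ultimately show False by simp
  qed
  ultimately show thesis by (rule that)
qed

lemma bounded_if_finite_growth:
  assumes nonneg: "\<And>s. 0 \<le> T s" and fin: "finite (growth_situations T)"
  shows "T (prefix \<omega> n) \<le> T [] + (\<Sum>s\<in>growth_situations T. T (s @ [True]) + T (s @ [False]))"
    (is "_ \<le> ?B")
proof (induction n)
  case 0
  show ?case using nonneg by (simp add: prefix_def sum_nonneg add_nonneg_nonneg)
next
  case (Suc n)
  let ?s = "prefix \<omega> n"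
  have prefix_Suc: "prefix \<omega> (Suc n) = ?s @ [\<omega> n]"
    by (simp add: prefix_def)
  show ?case
  proof (cases "?s \<in> growth_situations T")
    case True
    have "T (?s @ [\<omega> n]) \<le> T (?s @ [True]) + T (?s @ [False])"
      using nonneg by (cases "\<omega> n") (simp_all add: add_increasing add_increasing2)
    also have "\<dots> \<le> (\<Sum>s\<in>growth_situations T. T (s @ [True]) + T (s @ [False]))"
      using nonneg by (intro member_le_sum[OF True _ fin]) (simp add: add_nonneg_nonneg)
    also have "\<dots> \<le> ?B"
      using nonneg[of "[]"] by simp
    finally show ?thesis unfolding prefix_Suc .
  next
    case False
    then have "T (?s @ [\<omega> n]) \<le> T ?s"
      unfolding growth_situations_def by (cases "\<omega> n") auto
    with Suc.IH show ?thesis unfolding prefix_Suc by simp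
  qed
qed

lemma not_unbounded_along_if_bounded:
  assumes "\<And>n. T (prefix \<omega> n) \<le> B"
  shows "\<not> unbounded_along T \<omega>"
proof -
  have "limsup (\<lambda>n. ereal (T (prefix \<omega> n))) \<le> ereal B"
    using assms by (intro Limsup_bounded always_eventually) simp
  then show ?thesis unfolding unbounded_along_def by auto
qed

lemma limsup_diff_growth_function_neg:
  assumes bounded: "\<And>n. x n \<le> B" and "real_growth_function \<tau>"
  shows "limsup (\<lambda>n. ereal (x n - \<tau> n)) < 0"
proof -
  have mono: "mono \<tau>" and unbounded: "\<not> bdd_above (range \<tau>)"
    using assms(2) by (auto simp: real_growth_function_def)
  obtain N where N: "B + 1 < \<tau> N"
    using unbounded by (metis bdd_aboveI2 not_le rangeI)
  have "eventually (\<lambda>n. ereal (x n - \<tau> n) \<le> ereal (-1)) sequentially"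
    unfolding eventually_sequentially
  proof (intro exI allI impI)
    fix n
    assume "N \<le> n"
    then have "\<tau> N \<le> \<tau> n" using mono by (simp add: mono_def)
    then show "ereal (x n - \<tau> n) \<le> ereal (-1)" using bounded[of n] N by simp
  qed
  then have "limsup (\<lambda>n. ereal (x n - \<tau> n)) \<le> ereal (-1)"
    by (rule Limsup_bounded)
  also have "\<dots> < 0" by simp
  finally show ?thesis .
qed

lemma random_if_tests_bounded:
  assumes "\<And>T. T \<in> F_ML \<union> F_wML \<union> F_C \<Longrightarrow> test_supermartingale \<phi> T \<Longrightarrow>
      \<exists>B. \<forall>n. T (prefix \<omega> n) \<le> B"
  shows "random R \<phi> \<omega>"
proof (cases R)
  case R_S
  have "\<not> limsup (\<lambda>n. ereal (T (prefix \<omega> n) - \<tau> n)) \<ge> 0"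
    if "T \<in> F_C" "test_supermartingale \<phi> T" "real_growth_function \<tau>" for T \<tau>
    using assms[of T] that limsup_diff_growth_function_neg[of "\<lambda>n. T (prefix \<omega> n)" _ \<tau>]
    by (meson UnI2 not_le)
  then show ?thesis using R_S by auto
qed (use assms not_unbounded_along_if_bounded in fastforce)+

lemma exists_precise_forecast_all_random:
  "\<exists>\<phi>. forecasting_system \<phi> \<and> precise \<phi> \<and> (\<forall>\<omega>. random R \<phi> \<omega>)"
proof -
  have "countable (F_ML \<union> F_wML \<union> F_C)"
    using countable_F_ML countable_F_wML countable_F_C by simp
  then obtain \<phi> where "forecasting_system \<phi>" "precise \<phi>"
    and finite_growth: "\<And>T. T \<in> F_ML \<union> F_wML \<union> F_C \<Longrightarrow> supermartingale \<phi> T \<Longrightarrow>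
        finite (growth_situations T)"
    using forecast_defeating_countable_family by metis
  moreover have "random R \<phi> \<omega>" for \<omega>
  proof (rule random_if_tests_bounded)
    fix T
    assume "T \<in> F_ML \<union> F_wML \<union> F_C" "test_supermartingale \<phi> T"
    then have "\<forall>s. 0 \<le> T s" and "finite (growth_situations T)"
      using finite_growth by (auto simp: test_supermartingale_def test_process_def)
    then show "\<exists>B. \<forall>n. T (prefix \<omega> n) \<le> B"
      using bounded_if_finite_growth by blast
  qed
  ultimately show ?thesis by blast
qed

section \<open>Tests that follow a decidable guess\<close>

definition guess_gain :: "(situation \<Rightarrow> bool) \<Rightarrow> situation \<Rightarrow> bool \<Rightarrow> rat" where
  "guess_gain g s x = (if x = g s then 6/5 else 2/5)"

lemma multiplier_product_guess_gain_pos: "0 < multiplier_product (guess_gain g) s"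
  by (induction s rule: rev_induct) (simp_all add: guess_gain_def)

lemma recursive_guess_numerator:
  assumes "recursive_predicate sit_code g"
  obtains N where "recursive_nat N"
    and "\<And>s x. N (prod_encode (sit_code s, of_bool x)) = (if x = g s then 6 else 2)"
proof -
  obtain G where G: "recursive_nat G" and g: "\<And>s. g s \<longleftrightarrow> G (sit_code s) \<noteq> 0"
    using assms unfolding recursive_predicate_def by blast
  define N :: "nat \<Rightarrow> nat" where "N k = (let c = fst (prod_decode k); b = snd (prod_decode k) in
      if G c = 0 then (if b = 0 then 6 else 2) else (if b = 0 then 2 else 6))" for k
  have "recursive_nat N"
    unfolding N_def Let_def by (intro recursive_nat_intros recursive_nat_comp[OF G])
  moreover have "N (prod_encode (sit_code s, of_bool x)) = (if x = g s then 6 else 2)" for s x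
    by (cases x) (simp_all add: N_def g)
  ultimately show thesis by (rule that)
qed

lemma recursive_rat_guess_gain:
  assumes "recursive_predicate sit_code g"
  shows "recursive_rat (pair_code sit_code bool_code) (\<lambda>(s, x). guess_gain g s x)"
proof -
  obtain N where N: "recursive_nat N"
    and N_eq: "\<And>s x. N (prod_encode (sit_code s, of_bool x)) = (if x = g s then 6 else 2)"
    using recursive_guess_numerator[OF assms] by blast
  have "recursive_nat (\<lambda>k. prod_encode (2 * N k, 4))"
    by (intro recursive_nat_intros N)
  moreover have
    "guess_gain g s x = rat_of_code (prod_encode (2 * N (prod_encode (sit_code s, of_bool x)), 4))"
    for s x
    by (simp add: rat_of_code_even N_eq guess_gain_def)
  ultimately show ?thesis
    unfolding recursive_rat_def pair_code_def bool_code_def by auto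
qed

lemma multiplier_product_guess_gain:
  "multiplier_product (guess_gain g) s =
     of_nat (multiplier_product (\<lambda>s x. if x = g s then 6 else 2 :: nat) s) / 5 ^ length s"
  by (induction s rule: rev_induct) (simp_all add: guess_gain_def)

lemma recursive_rat_multiplier_product_guess_gain:
  assumes "recursive_predicate sit_code g"
  shows "recursive_rat sit_code (multiplier_product (guess_gain g))"
proof -
  obtain N where N: "recursive_nat N"
    and N_eq: "\<And>s x. N (prod_encode (sit_code s, of_bool x)) = (if x = g s then 6 else 2)"
    using recursive_guess_numerator[OF assms] by blast
  let ?numerator = "multiplier_product (\<lambda>s x. if x = g s then 6 else 2 :: nat)"
  let ?bit = "\<lambda>k. fst (prod_decode (snd (prod_decode k)))"
  let ?acc = "\<lambda>k. snd (prod_decode (snd (prod_decode k)))"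
  have "recursive_nat (\<lambda>k. ?acc k * N (prod_encode (fst (prod_decode k), ?bit k)))"
    by (intro recursive_nat_intros recursive_nat_comp[OF N])
  then obtain num where num: "recursive_nat num" and num_eq: "\<And>s. ?numerator s = num (sit_code s)"
    by (rule recursive_nat_situation_recursion[where F = ?numerator])
      (simp_all add: N_eq mult.commute)
  have "recursive_nat (\<lambda>k. 5 * ?acc k)"
    by (intro recursive_nat_intros)
  then obtain den where den: "recursive_nat den"
    and den_eq: "\<And>s. (5::nat) ^ length s = den (sit_code s)"
    by (rule recursive_nat_situation_recursion[where F = "\<lambda>s. 5 ^ length s"]) simp_all
  have "recursive_nat (\<lambda>c. prod_encode (2 * num c, den c - 1))"
    by (intro recursive_nat_intros num den)
  moreover have "multiplier_product (guess_gain g) s =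
      rat_of_code (prod_encode (2 * num (sit_code s), den (sit_code s) - 1))" for s
  proof -
    have "0 < den (sit_code s)" using den_eq[of s, symmetric] by simp
    then show ?thesis
      unfolding multiplier_product_guess_gain rat_of_code_even num_eq
      by (simp add: den_eq[symmetric] of_nat_diff)
  qed
  ultimately show ?thesis unfolding recursive_rat_def by blast
qed

definition guessing_process :: "(situation \<Rightarrow> bool) \<Rightarrow> situation \<Rightarrow> real" where
  "guessing_process g s = real_of_rat (multiplier_product (guess_gain g) s)"

lemma guessing_process_tests:
  assumes "recursive_predicate sit_code g"
  shows "guessing_process g \<in> F_ML \<inter> F_wML \<inter> F_C"
proof -
  let ?T = "\<lambda>s. real_of_rat (multiplier_product (guess_gain g) s)"
  let ?D = "\<lambda>s x. real_of_rat (guess_gain g s x)"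
  have pos: "0 < ?T s" for s
    using multiplier_product_guess_gain_pos by simp
  then have test: "test_process ?T"
    unfolding test_process_def by (simp add: less_imp_le)
  have "?T \<in> F_C"
    unfolding F_C_def using test pos recursive_rat_multiplier_product_guess_gain[OF assms]
    by (intro CollectI conjI exI[of _ "multiplier_product (guess_gain g)"]) auto
  moreover have "?T \<in> F_ML"
    unfolding F_ML_def
    using test
      recursive_rat_imp_lower_semicomputable[OF recursive_rat_multiplier_product_guess_gain[OF assms]]
    by simp
  moreover have "?T \<in> F_wML"
  proof -
    have "multiplier_process ?D"
      unfolding multiplier_process_def by (simp add: guess_gain_def)
    moreover have "generated_by ?D ?T"
      unfolding generated_by_iff of_rat_multiplier_product ..
    moreover have "(\<lambda>(s, x). ?D s x) = (\<lambda>d. real_of_rat ((\<lambda>(s, x). guess_gain g s x) d))"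
      by auto
    then have "lower_semicomputable (pair_code sit_code bool_code) (\<lambda>(s, x). ?D s x)"
      using recursive_rat_imp_lower_semicomputable[OF recursive_rat_guess_gain[OF assms]]
      by (simp only:)
    ultimately show ?thesis
      unfolding F_wML_def using test by (intro CollectI conjI exI[of _ ?D]) auto
  qed
  ultimately show ?thesis
    unfolding guessing_process_def[abs_def] by blast
qed

lemma supermartingale_guessing_process:
  assumes \<phi>: "\<And>s. \<phi> s = {p s}"
    and guess_True: "\<And>s. g s \<Longrightarrow> p s \<le> 3/4"
    and guess_False: "\<And>s. \<not> g s \<Longrightarrow> 1/4 \<le> p s"
  shows "supermartingale \<phi> (guessing_process g)"
  unfolding supermartingale_def guessing_process_def[abs_def]
proof
  fix s
  let ?T = "\<lambda>s. real_of_rat (multiplier_product (guess_gain g) s)"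
  have "E (p s) (\<lambda>x. real_of_rat (guess_gain g s x)) \<le> 1"
    using guess_True[of s] guess_False[of s]
    by (cases "g s"; simp add: E_def guess_gain_def of_rat_divide field_simps)
  moreover have "0 \<le> ?T s"
    using multiplier_product_guess_gain_pos[of g s] by simp
  ultimately have "?T s * (E (p s) (\<lambda>x. real_of_rat (guess_gain g s x)) - 1) \<le> 0"
    by (intro mult_nonneg_nonpos) simp_all
  moreover have "E (p s) (Delta ?T s) = ?T s * (E (p s) (\<lambda>x. real_of_rat (guess_gain g s x)) - 1)"
    unfolding E_def Delta_def
    by (simp add: of_rat_mult right_diff_distrib left_diff_distrib distrib_left)
  ultimately show "upperE (\<phi> s) (Delta ?T s) \<le> 0"
    by (simp add: \<phi> upperE_def)
qed

primrec guessed_prefix :: "(situation \<Rightarrow> bool) \<Rightarrow> nat \<Rightarrow> situation" where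
  "guessed_prefix g 0 = []"
| "guessed_prefix g (Suc n) = guessed_prefix g n @ [g (guessed_prefix g n)]"

lemma prefix_guessed_path: "prefix (\<lambda>n. g (guessed_prefix g n)) n = guessed_prefix g n"
  by (induction n) (simp_all add: prefix_def)

lemma guessing_process_guessed_prefix: "guessing_process g (guessed_prefix g n) = (6/5) ^ n"
proof -
  have "multiplier_product (guess_gain g) (guessed_prefix g n) = (6/5) ^ n"
    by (induction n) (simp_all add: guess_gain_def)
  then show ?thesis by (simp add: guessing_process_def of_rat_power of_rat_divide)
qed

lemma real_growth_function_linear: "real_growth_function (\<lambda>n. real n / real (Suc k))"
proof -
  have "recursive_nat (\<lambda>c. prod_encode (2 * fst (prod_decode c), k))"
    by (intro recursive_nat_intros)
  moreover have "Fract (int d) (int (Suc k)) = rat_of_code (prod_encode (2 * d, k))" for d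
    by (simp add: rat_of_code_even Fract_of_int_quotient)
  ultimately have "recursive_rat (pair_code id id) (\<lambda>(d, n). Fract (int d) (int (Suc k)))"
    unfolding recursive_rat_def pair_code_def by auto
  moreover have "real_of_rat (Fract (int d) (int (Suc k))) = real d / real (Suc k)" for d
    by (simp add: Fract_of_int_quotient of_rat_divide of_rat_add)
  ultimately have "computable_real id (\<lambda>n. real n / real (Suc k))"
    unfolding computable_real_def by (intro exI[of _ "\<lambda>(d, n). Fract (int d) (int (Suc k))"]) auto
  moreover have "mono (\<lambda>n. real n / real (Suc k))"
    by (auto simp: mono_def divide_right_mono)
  moreover have "\<not> bdd_above (range (\<lambda>n. real n / real (Suc k)))"
  proof
    assume "bdd_above (range (\<lambda>n. real n / real (Suc k)))"
    then obtain M where M: "\<And>n. real n / real (Suc k) \<le> M" by (auto simp: bdd_above_def)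
    obtain n where "M * real (Suc k) < real n" using reals_Archimedean2 by blast
    then have "M < real n / real (Suc k)"
      using pos_less_divide_eq[of "real (Suc k)" M "real n"] by linarith
    with M[of n] show False by linarith
  qed
  moreover have "\<forall>n. 0 \<le> real n / real (Suc k)" by simp
  ultimately show ?thesis unfolding real_growth_function_def by (intro conjI)
qed

lemma unbounded_along_if_tendsto_top:
  assumes "filterlim (\<lambda>n. T (prefix \<omega> n)) at_top sequentially"
  shows "unbounded_along T \<omega>"
proof -
  have "((\<lambda>n. ereal (T (prefix \<omega> n))) \<longlongrightarrow> \<infinity>) sequentially"
    using assms by (simp only: tendsto_PInfty_eq_at_top)
  then show ?thesis
    unfolding unbounded_along_def by (intro lim_imp_Limsup) simp_all
qed

lemma not_random_guessed_path:
  assumes \<phi>: "\<And>s. \<phi> s = {p s}" and g: "recursive_predicate sit_code g"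
    and "\<And>s. g s \<Longrightarrow> p s \<le> 3/4" and "\<And>s. \<not> g s \<Longrightarrow> 1/4 \<le> p s"
  shows "\<not> random R \<phi> (\<lambda>n. g (guessed_prefix g n))"
proof -
  let ?T = "guessing_process g"
  let ?\<omega> = "\<lambda>n. g (guessed_prefix g n)"
  have tests: "?T \<in> F_ML \<inter> F_wML \<inter> F_C"
    by (rule guessing_process_tests[OF g])
  then have "test_process ?T"
    by (simp add: F_C_def)
  then have tsm: "test_supermartingale \<phi> ?T"
    unfolding test_supermartingale_def
    using supermartingale_guessing_process[OF assms(1,3,4)] by (intro conjI)
  have path: "?T (prefix ?\<omega> n) = (6/5) ^ n" for n
    by (simp add: prefix_guessed_path guessing_process_guessed_prefix)
  have unb: "unbounded_along ?T ?\<omega>"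
  proof (rule unbounded_along_if_tendsto_top)
    have "filterlim (\<lambda>n. (6/5 :: real) ^ n) at_infinity sequentially"
      by (rule filterlim_realpow_sequentially_gt1) simp
    then show "filterlim (\<lambda>n. ?T (prefix ?\<omega> n)) at_top sequentially"
      unfolding path by (rule filterlim_at_infinity_imp_filterlim_at_top) simp
  qed
  have growth: "0 \<le> limsup (\<lambda>n. ereal (?T (prefix ?\<omega> n) - real n / real (Suc 4)))"
  proof (intro le_Limsup always_eventually allI)
    fix n
    have "1 + real n / 5 \<le> (6/5 :: real) ^ n"
      using Bernoulli_inequality[of "1/5 :: real" n] by simp
    then show "0 \<le> ereal (?T (prefix ?\<omega> n) - real n / real (Suc 4))"
      unfolding path by simp
  qed simp
  show ?thesis
  proof (cases R)
    case R_S
    then show ?thesis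
      using tests tsm growth real_growth_function_linear[of 4] by auto
  qed (use tests tsm unb in auto)
qed

lemma precise_eq_singleton_lower_fs:
  assumes "precise \<phi>"
  shows "\<phi> s = {lower_fs \<phi> s}"
proof -
  obtain r where "\<phi> s = {r}" using assms unfolding precise_def by blast
  then show ?thesis by (simp add: lower_fs_def)
qed

lemma not_stationary_if_all_random:
  assumes "precise \<phi>" and "\<And>\<omega>. random R \<phi> \<omega>"
  shows "\<not> stationary \<phi>"
proof
  assume "stationary \<phi>"
  then obtain I where "\<And>s. \<phi> s = I"
    unfolding stationary_def by blast
  then have \<phi>: "\<phi> s = {lower_fs \<phi> []}" for s
    using precise_eq_singleton_lower_fs[OF assms(1), of "[]"] by simp
  have "\<not> random R \<phi> (\<lambda>n. (lower_fs \<phi> [] \<le> 3/4))"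
    using not_random_guessed_path[OF \<phi> recursive_predicate_const, of "lower_fs \<phi> [] \<le> 3/4"]
    by simp
  with assms(2) show False by blast
qed

lemma not_computable_if_all_random:
  assumes "precise \<phi>" and "\<And>\<omega>. random R \<phi> \<omega>"
  shows "\<not> computable_fs \<phi>"
proof
  assume "computable_fs \<phi>"
  then obtain q where q: "recursive_rat (pair_code sit_code id) q"
    and approx: "\<And>s n. \<bar>lower_fs \<phi> s - real_of_rat (q (s, n))\<bar> < 1 / 2 ^ n"
    unfolding computable_fs_def computable_real_def by blast
  have close: "\<bar>lower_fs \<phi> s - real_of_rat (q (s, 2))\<bar> < 1/4" for s
    using approx[of s 2] by (simp add: power2_eq_square)
  define g where "g s \<longleftrightarrow> q (s, 2) \<le> 1/2" for s
  have "recursive_predicate sit_code g"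
    using recursive_predicate_rat_le[OF recursive_rat_fix_snd[where n = 2, OF q],
        where m = 1 and k = 1]
    by (simp add: g_def[abs_def])
  moreover have "lower_fs \<phi> s \<le> 3/4" if "g s" for s
  proof -
    have "real_of_rat (q (s, 2)) \<le> 1/2"
      using that unfolding g_def by (metis of_rat_less_eq of_rat_divide of_rat_1 of_rat_numeral_eq)
    moreover have "lower_fs \<phi> s - real_of_rat (q (s, 2)) < 1/4"
      using close[of s] by (rule le_less_trans[OF abs_ge_self])
    ultimately show ?thesis by linarith
  qed
  moreover have "1/4 \<le> lower_fs \<phi> s" if "\<not> g s" for s
  proof -
    have "1/2 < real_of_rat (q (s, 2))"
      using that unfolding g_def
      by (metis not_le of_rat_less of_rat_divide of_rat_1 of_rat_numeral_eq)
    moreover have "- (lower_fs \<phi> s - real_of_rat (q (s, 2))) < 1/4"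
      using close[of s] by (rule le_less_trans[OF abs_ge_minus_self])
    ultimately show ?thesis by linarith
  qed
  ultimately have "\<not> random R \<phi> (\<lambda>n. g (guessed_prefix g n))"
    using not_random_guessed_path precise_eq_singleton_lower_fs[OF assms(1)] by blast
  with assms(2) show False by blast
qed

theorem corollary15:
  fixes R :: rtype
  shows "(\<exists>\<phi>. forecasting_system \<phi> \<and> precise \<phi> \<and> (\<forall>\<omega>. random R \<phi> \<omega>)) \<and>
         (\<forall>\<phi>. forecasting_system \<phi> \<and> precise \<phi> \<and> (\<forall>\<omega>. random R \<phi> \<omega>)
              \<longrightarrow> \<not> stationary \<phi> \<and> \<not> computable_fs \<phi>)"
  using exists_precise_forecast_all_random not_stationary_if_all_random
    not_computable_if_all_random
  by blast

end
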